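(* Let $N\ge 1$, let $\mathbf{x}\in\mathbb{R}^N$ and let $\mathcal{F}=\mathrm{DFT}(\mathbf{x})\in\mathbb{C}^N$ be its frequency spectrum. Let $\mathbf{W}\in\mathbb{C}^{N\times N}$ be a weight matrix and $\mathbf{b}\in\mathbb{C}^N$ a bias vector, and set $\tilde{\mathcal{F}}=\mathbf{W}\mathcal{F}+\mathbf{b}$. For $i=0,1,\dots,N-1$ define $$w_i=\left[\mathrm{diag}(\mathbf{W},i),\ \mathrm{diag}(\mathbf{W},i-N)\right]\in\mathbb{C}^N,\qquad \Omega_i=\mathrm{IDFT}(w_i)\in\mathbb{C}^N,$$ $$\mathcal{M}_i(\mathbf{x})=\mathbf{x}\odot\left[e^{-j\frac{2\pi}{N}ik}\right]_{k=0,1,\dots,N-1}\in\mathbb{C}^N .$$ Then $$\mathrm{IDFT}(\tilde{\mathcal{F}})=\sum_{i=0}^{N-1}\Omega_i\circledast\mathcal{M}_i(\mathbf{x})+\mathrm{IDFT}(\mathbf{b}),$$ i.e. $\tilde{\mathcal{F}}=\mathbf{W}\mathcal{F}+\mathbf{b}$ and $\sum_{i=0}^{N-1}\Omega_i\circledast\mathcal{M}_i(\mathbf{x})+\mathrm{IDFT}(\mathbf{b})$ form a DFT pair.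
   Context: Vectors are indexed from $0$ to $N-1$ and $j$ denotes the imaginary unit. The discrete Fourier transform of $\mathbf{x}\in\mathbb{C}^N$ is $\mathrm{DFT}(\mathbf{x})[k]=\sum_{n=0}^{N-1}e^{-j\frac{2\pi}{N}nk}\mathbf{x}[n]$, and the inverse is $\mathrm{IDFT}(\mathcal{F})[n]=\frac{1}{N}\sum_{k=0}^{N-1}\mathcal{F}[k]e^{j\frac{2\pi}{N}kn}$. The symbol $\circledast$ denotes circular convolution, $(\mathbf{u}\circledast\mathbf{v})[n]=\sum_{m=0}^{N-1}\mathbf{u}[m]\mathbf{v}[(n-m)\bmod N]$; $\odot$ is the Hadamard (element-wise) product; $[\cdot,\cdot]$ denotes concatenation of two vectors. For an integer $i$ with $|i|<N$, $\mathrm{diag}(\mathbf{W},i)\in\mathbb{C}^{N-|i|}$ is the $i$-th diagonal of $\mathbf{W}$: for $i\ge 0$ it is $(\mathbf{W}[0,i],\mathbf{W}[1,i+1],\dots,\mathbf{W}[N-1-i,N-1])$ (the main diagonal for $i=0$, a diagonal above it for $i>0$), and for $i<0$ it is $(\mathbf{W}[-i,0],\mathbf{W}[-i+1,1],\dots,\mathbf{W}[N-1,N-1+i])$ (a diagonal below the main one); by convention $\mathrm{diag}(\mathbf{W},-N)=\emptyset$ (the empty vector). $\mathcal{M}_i(\mathbf{x})$ is called the $i$-th modulated version of $\mathbf{x}$, with $\mathcal{M}_0(\mathbf{x})=\mathbf{x}$. *)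

theory Defs
  imports Complex_Main
begin

(* Vectors in C^N are represented as functions nat => complex, only indices 0..N-1 matter.
   Matrices as nat => nat => complex, W r c = W[r,c]. *)

definition DFT :: "nat \<Rightarrow> (nat \<Rightarrow> complex) \<Rightarrow> nat \<Rightarrow> complex" where
  "DFT N x k = (\<Sum>n<N. exp (- \<i> * of_real (2 * pi / real N) * of_nat (n * k)) * x n)"

definition IDFT :: "nat \<Rightarrow> (nat \<Rightarrow> complex) \<Rightarrow> nat \<Rightarrow> complex" where
  "IDFT N F n = (1 / of_nat N) * (\<Sum>k<N. F k * exp (\<i> * of_real (2 * pi / real N) * of_nat (k * n)))"

definition cconv :: "nat \<Rightarrow> (nat \<Rightarrow> complex) \<Rightarrow> (nat \<Rightarrow> complex) \<Rightarrow> nat \<Rightarrow> complex" where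
  "cconv N u v n = (\<Sum>m<N. u m * v (nat ((int n - int m) mod int N)))"

(* i-th diagonal of the N x N matrix W, as a list of length N - |i| (empty for i = -N) *)
definition diag :: "nat \<Rightarrow> (nat \<Rightarrow> nat \<Rightarrow> complex) \<Rightarrow> int \<Rightarrow> complex list" where
  "diag N W i = (if i \<ge> 0 then map (\<lambda>t. W t (t + nat i)) [0..<N - nat i]
                 else map (\<lambda>t. W (t + nat (- i)) t) [0..<N - nat (- i)])"

definition wvec :: "nat \<Rightarrow> (nat \<Rightarrow> nat \<Rightarrow> complex) \<Rightarrow> nat \<Rightarrow> nat \<Rightarrow> complex" where
  "wvec N W i k = (diag N W (int i) @ diag N W (int i - int N)) ! k"

definition Omega :: "nat \<Rightarrow> (nat \<Rightarrow> nat \<Rightarrow> complex) \<Rightarrow> nat \<Rightarrow> nat \<Rightarrow> complex" where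
  "Omega N W i = IDFT N (wvec N W i)"

definition modul :: "nat \<Rightarrow> nat \<Rightarrow> (nat \<Rightarrow> complex) \<Rightarrow> nat \<Rightarrow> complex" where
  "modul N i x k = x k * exp (- \<i> * of_real (2 * pi / real N) * of_nat (i * k))"

end

theory Submission
  imports Defs
begin

(* Split the matrix-vector product along cyclic diagonals: (W F)[k] = \<Sum>i w_i[k] F[k + i].
   Modulating x by e^(-j 2 pi i k / N) shifts its spectrum, so F[k + i] = DFT(M_i x)[k].
   By the convolution theorem, the IDFT of the pointwise product w_i DFT(M_i x) is the circular
   convolution of IDFT(w_i) = \<Omega>_i with M_i x; linearity of the IDFT does the rest. *)

(* For N = 0 the frequency 2 pi / N is 0 (division by zero), so twiddle 0 is constantly 1
   and the periodicity lemmas below hold without a hypothesis N > 0. *)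
definition twiddle :: "nat \<Rightarrow> int \<Rightarrow> complex" where
  "twiddle N a = exp (\<i> * of_real (2 * pi / real N) * of_int a)"

lemma twiddle_add: "twiddle N (a + b) = twiddle N a * twiddle N b"
  unfolding twiddle_def by (simp add: ring_distribs exp_add)

lemma twiddle_multiple: "twiddle N (int N * q) = 1"
proof (cases "N = 0")
  case False
  then have "\<i> * of_real (2 * pi / real N) * of_int (int N * q) = \<i> * of_real (2 * pi * of_int q)"
    by (simp add: field_simps)
  then show ?thesis
    unfolding twiddle_def using cis_multiple_2pi[of "of_int q"] by (simp add: cis_conv_exp)
qed (simp add: twiddle_def)

lemma twiddle_mod: "twiddle N (a mod int N) = twiddle N a"
  by (metis mult_div_mod_eq twiddle_add twiddle_multiple mult_1)

lemma twiddle_cong: "a mod int N = b mod int N \<Longrightarrow> twiddle N a = twiddle N b"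
  by (metis twiddle_mod)

lemma sum_rotate_mod:
  fixes g :: "nat \<Rightarrow> 'a::comm_monoid_add"
  shows "(\<Sum>i<N. g ((k + i) mod N)) = (\<Sum>m<N. g m)"
proof (rule sum.reindex_bij_witness[where j = "\<lambda>i. (k + i) mod N"
                                     and i = "\<lambda>m. (m + (N - k mod N)) mod N"])
  have shift: "(k + m + (N - k mod N)) mod N = m mod N" if "N > 0" for m
  proof -
    have "k = N * (k div N) + k mod N" "k mod N < N"
      using that by simp_all
    then have "k + m + (N - k mod N) = m + N * (k div N + 1)"
      by (simp only: distrib_left)
    then show ?thesis
      by (simp only: mod_mult_self2)
  qed
  show "((k + i) mod N + (N - k mod N)) mod N = i" if "i \<in> {..<N}" for i
  proof -
    have "((k + i) mod N + (N - k mod N)) mod N = (k + i + (N - k mod N)) mod N"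
      by (rule mod_add_left_eq)
    also have "\<dots> = i"
      using shift[of i] that by simp
    finally show ?thesis .
  qed
  show "(k + (m + (N - k mod N)) mod N) mod N = m" if "m \<in> {..<N}" for m
  proof -
    have "(k + (m + (N - k mod N)) mod N) mod N = (k + m + (N - k mod N)) mod N"
      by (simp only: mod_add_right_eq add.assoc)
    also have "\<dots> = m"
      using shift[of m] that by simp
    finally show ?thesis .
  qed
qed auto

lemma exp_conv_twiddle:
  "exp (\<i> * of_real (2 * pi / real N) * of_nat m) = twiddle N (int m)"
  "exp (- \<i> * of_real (2 * pi / real N) * of_nat m) = twiddle N (- int m)"
  unfolding twiddle_def by simp_all

lemma DFT_twiddle: "DFT N x k = (\<Sum>n<N. twiddle N (- int (n * k)) * x n)"
  unfolding DFT_def exp_conv_twiddle ..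

lemma IDFT_twiddle: "IDFT N F n = 1 / of_nat N * (\<Sum>k<N. F k * twiddle N (int (k * n)))"
  unfolding IDFT_def exp_conv_twiddle ..

lemma modul_twiddle: "modul N i x k = x k * twiddle N (- int (i * k))"
  unfolding modul_def exp_conv_twiddle ..

lemma DFT_mod: "DFT N x (k mod N) = DFT N x k"
proof -
  have "(- int (n * (k mod N))) mod int N = (- int (n * k)) mod int N" for n
    by (metis mod_minus_eq mod_mult_right_eq zmod_int)
  then show ?thesis
    unfolding DFT_twiddle by (metis twiddle_cong)
qed

lemma DFT_modul: "DFT N (modul N i x) k = DFT N x (k + i)"
  unfolding DFT_twiddle modul_twiddle
  by (intro sum.cong refl) (simp add: algebra_simps flip: twiddle_add)

lemma IDFT_cong: "(\<And>k. k < N \<Longrightarrow> F k = G k) \<Longrightarrow> IDFT N F n = IDFT N G n"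
  unfolding IDFT_def by (metis (no_types, lifting) lessThan_iff sum.cong)

lemma IDFT_add: "IDFT N (\<lambda>k. F k + G k) n = IDFT N F n + IDFT N G n"
  unfolding IDFT_def by (simp add: ring_distribs sum.distrib)

lemma IDFT_sum: "IDFT N (\<lambda>k. \<Sum>i\<in>I. F i k) n = (\<Sum>i\<in>I. IDFT N (F i) n)"
  unfolding IDFT_def by (simp add: sum_distrib_left sum_distrib_right sum.swap[of _ I])

lemma cconv_IDFT: "cconv N (IDFT N w) v n = IDFT N (\<lambda>k. w k * DFT N v k) n"
proof (cases "N = 0")
  case True
  then show ?thesis by (simp add: cconv_def IDFT_def)
next
  case False
  define L where "L m = nat ((int n - int m) mod int N)" for m
  have L_less: "L m < N" for m
    using False by (simp add: L_def nat_less_iff)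
  have L_L: "L (L m) = m" if "m < N" for m
    using False that by (simp add: L_def mod_diff_right_eq)
  have twiddle_L: "twiddle N (int (k * L l)) = twiddle N (int (k * n)) * twiddle N (- int (l * k))" for k l
  proof -
    have "int (k * L l) mod int N = (int (k * n) + - int (l * k)) mod int N"
      using False by (simp add: L_def mod_mult_right_eq algebra_simps)
    then show ?thesis
      by (metis twiddle_add twiddle_cong)
  qed
  have "cconv N (IDFT N w) v n = (\<Sum>m<N. IDFT N w m * v (L m))"
    unfolding cconv_def L_def ..
  also have "\<dots> = (\<Sum>l<N. IDFT N w (L l) * v l)"
    by (rule sum.reindex_bij_witness[where i = L and j = L]) (auto simp: L_less L_L)
  also have "\<dots> = (\<Sum>l<N. \<Sum>k<N. 1 / of_nat N * (w k * twiddle N (int (k * n)) * (twiddle N (- int (l * k)) * v l)))"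
    unfolding IDFT_twiddle twiddle_L by (simp add: sum_distrib_left sum_distrib_right mult_ac)
  also have "\<dots> = (\<Sum>k<N. \<Sum>l<N. 1 / of_nat N * (w k * twiddle N (int (k * n)) * (twiddle N (- int (l * k)) * v l)))"
    by (rule sum.swap)
  also have "\<dots> = IDFT N (\<lambda>k. w k * DFT N v k) n"
    by (simp add: IDFT_twiddle DFT_twiddle sum_distrib_left sum_distrib_right mult_ac)
  finally show ?thesis .
qed

lemma wvec_eq_rotated_entry:
  assumes "k < N" "i < N"
  shows "wvec N W i k = W k ((k + i) mod N)"
proof (cases "k < N - i")
  case True
  then show ?thesis
    using assms unfolding wvec_def diag_def by (simp add: nth_append)
next
  case False
  then have idx: "N \<le> k + i" "k + i - N < i"
    using assms by linarith+
  then have "(k + i) mod N = k + i - N"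
    using assms by (simp add: le_mod_geq)
  moreover have "wvec N W i k = W (k + i - N + (N - i)) (k + i - N)"
    using assms False idx unfolding wvec_def diag_def by (simp add: nth_append nat_diff_distrib)
  ultimately show ?thesis
    using assms idx by simp
qed

lemma matrix_vector_sum_diagonals:
  assumes "k < N"
  shows "(\<Sum>m<N. W k m * F m) = (\<Sum>i<N. wvec N W i k * F ((k + i) mod N))"
  using assms sum_rotate_mod[where g = "\<lambda>m. W k m * F m" and k = k and N = N]
  by (simp add: wvec_eq_rotated_entry)

theorem theorem1:
  fixes N :: nat and x :: "nat \<Rightarrow> real" and W :: "nat \<Rightarrow> nat \<Rightarrow> complex"
    and b :: "nat \<Rightarrow> complex"
  assumes "N \<ge> 1"
  defines "F \<equiv> DFT N (\<lambda>n. complex_of_real (x n))"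
  defines "Ft \<equiv> (\<lambda>k. (\<Sum>m<N. W k m * F m) + b k)"
  shows "\<forall>n<N. IDFT N Ft n =
           (\<Sum>i<N. cconv N (Omega N W i) (modul N i (\<lambda>n. complex_of_real (x n))) n)
           + IDFT N b n"
proof (intro allI impI)
  fix n
  define X where "X = (\<lambda>n. complex_of_real (x n))"
  have "Ft k = (\<Sum>i<N. wvec N W i k * DFT N (modul N i X) k) + b k" if "k < N" for k
    using that unfolding Ft_def F_def X_def
    by (simp add: matrix_vector_sum_diagonals DFT_mod DFT_modul)
  then have "IDFT N Ft n = IDFT N (\<lambda>k. \<Sum>i<N. wvec N W i k * DFT N (modul N i X) k) n + IDFT N b n"
    unfolding IDFT_add[symmetric] by (rule IDFT_cong)
  also have "\<dots> = (\<Sum>i<N. cconv N (Omega N W i) (modul N i X) n) + IDFT N b n"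
    unfolding IDFT_sum Omega_def cconv_IDFT ..
  finally show "IDFT N Ft n = (\<Sum>i<N. cconv N (Omega N W i) (modul N i (\<lambda>n. complex_of_real (x n))) n) + IDFT N b n"
    unfolding X_def .
qed

end
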